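(* For any $D\subset S$ and $A\subset\Omega$: (a) if $\phi\in F^D_A$, then $\phi_\pi\in F^D_A$; (b) $\overline{F^D_A}\cap\mathcal H_\pi=\overline{F^D_A\cap\mathcal H_\pi}$.
   Context: Let $\mathcal H$ be a complex Hilbert space; $\overline V$ is the closure of $V$. A projection is a bounded self-adjoint idempotent operator; $\wedge_\alpha p_\alpha$ is the projection onto the intersection of ranges. Let $S$ be a set; for each $t\in S$ let $\Gamma(t)$ be a countable set and for $a\in\Gamma(t)$ let $p^t_a$ be a projection on $\mathcal H$ with $\sum_{a\in\Gamma(t)}p^t_a=I$ (strong convergence). Let $\pi=\{p^t_a\}$ and $p^{t_1,\dots,t_k}_{a_1,\dots,a_k}=\wedge_{i=1}^kp^{t_i}_{a_i}$. $\pi$ commutes on $\phi$ if $W\phi=V\phi$ whenever $W,V$ are finite products of elements of $\pi$ with the same factors (with multiplicity) in possibly different orders; $\mathcal H_\pi$ is the closed subspace of such $\phi$, $p_\pi$ its projection, $\phi_\pi=p_\pi\phi$. Let $\Omega=\prod_{t\in S}\Gamma(t)$. For $A\subset\Omega$ and $D\subset S$, $F^D_A=\{\phi\in\mathcal H:$ for every $\omega\in A$ there are $t_1,\dots,t_k\in D$ with $p^{t_1,\dots,t_k}_{\omega_{t_1},\dots,\omega_{t_k}}\phi=0\}$. *)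

theory Defs
  imports "HOL-Analysis.Analysis"
begin

text \<open>A complex Hilbert space is modelled as a real Hilbert space
  ('h :: {real_inner, complete_space}) together with an orthogonal complex
  structure J (multiplication by i): J real-linear, J (J x) = -x,
  inner (J x) (J y) = inner x y.  The real inner product is the real part of
  the complex one.\<close>

definition complex_structure :: "('h::{real_inner,complete_space} \<Rightarrow> 'h) \<Rightarrow> bool" where
  "complex_structure J \<longleftrightarrow> linear J \<and> (\<forall>x. J (J x) = - x) \<and> (\<forall>x y. inner (J x) (J y) = inner x y)"

definition is_projection :: "('h::{real_inner,complete_space} \<Rightarrow> 'h) \<Rightarrow> ('h \<Rightarrow> 'h) \<Rightarrow> bool" where
  "is_projection J p \<longleftrightarrow> bounded_linear p \<and> (\<forall>x. p (J x) = J (p x))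
     \<and> (\<forall>x y. inner (p x) y = inner x (p y)) \<and> (\<forall>x. p (p x) = p x)"

definition proj_onto :: "('h::{real_inner,complete_space} \<Rightarrow> 'h) \<Rightarrow> 'h set \<Rightarrow> ('h \<Rightarrow> 'h)" where
  "proj_onto J M = (THE q. is_projection J q \<and> range q = M)"

definition proj_wedge :: "('h::{real_inner,complete_space} \<Rightarrow> 'h) \<Rightarrow> ('h \<Rightarrow> 'h) list \<Rightarrow> ('h \<Rightarrow> 'h)" where
  "proj_wedge J ps = proj_onto J (\<Inter>p\<in>set ps. range p)"

definition proj_family :: "('h::{real_inner,complete_space} \<Rightarrow> 'h) \<Rightarrow> 's set \<Rightarrow> ('s \<Rightarrow> 'a set)
    \<Rightarrow> ('s \<Rightarrow> 'a \<Rightarrow> 'h \<Rightarrow> 'h) \<Rightarrow> bool" where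
  "proj_family J S \<Gamma> P \<longleftrightarrow>
     (\<forall>t\<in>S. countable (\<Gamma> t) \<and> (\<forall>a\<in>\<Gamma> t. is_projection J (P t a))
        \<and> (\<forall>x. ((\<lambda>a. P t a x) has_sum x) (\<Gamma> t)))"

definition prod_ops :: "('s \<Rightarrow> 'a \<Rightarrow> 'h \<Rightarrow> 'h) \<Rightarrow> ('s \<times> 'a) list \<Rightarrow> 'h \<Rightarrow> 'h" where
  "prod_ops P xs = foldr (\<circ>) (map (\<lambda>(t, a). P t a) xs) id"

definition valid_idx :: "'s set \<Rightarrow> ('s \<Rightarrow> 'a set) \<Rightarrow> ('s \<times> 'a) list \<Rightarrow> bool" where
  "valid_idx S \<Gamma> xs \<longleftrightarrow> (\<forall>(t, a)\<in>set xs. t \<in> S \<and> a \<in> \<Gamma> t)"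

definition commutes_on :: "'s set \<Rightarrow> ('s \<Rightarrow> 'a set) \<Rightarrow> ('s \<Rightarrow> 'a \<Rightarrow> 'h \<Rightarrow> 'h) \<Rightarrow> 'h \<Rightarrow> bool" where
  "commutes_on S \<Gamma> P \<phi> \<longleftrightarrow>
     (\<forall>xs ys. valid_idx S \<Gamma> xs \<and> valid_idx S \<Gamma> ys \<and> mset xs = mset ys
        \<longrightarrow> prod_ops P xs \<phi> = prod_ops P ys \<phi>)"

definition H_pi :: "'s set \<Rightarrow> ('s \<Rightarrow> 'a set) \<Rightarrow> ('s \<Rightarrow> 'a \<Rightarrow> 'h \<Rightarrow> 'h) \<Rightarrow> 'h set" where
  "H_pi S \<Gamma> P = {\<phi>. commutes_on S \<Gamma> P \<phi>}"

text \<open>p_pi, the projection onto H_pi (phi_pi = p_pi phi).\<close>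
definition p_pi :: "('h::{real_inner,complete_space} \<Rightarrow> 'h) \<Rightarrow> 's set \<Rightarrow> ('s \<Rightarrow> 'a set)
    \<Rightarrow> ('s \<Rightarrow> 'a \<Rightarrow> 'h \<Rightarrow> 'h) \<Rightarrow> 'h \<Rightarrow> 'h" where
  "p_pi J S \<Gamma> P = proj_onto J (H_pi S \<Gamma> P)"

definition F_set :: "('h::{real_inner,complete_space} \<Rightarrow> 'h) \<Rightarrow> ('s \<Rightarrow> 'a \<Rightarrow> 'h \<Rightarrow> 'h)
    \<Rightarrow> 's set \<Rightarrow> ('s \<Rightarrow> 'a) set \<Rightarrow> 'h set" where
  "F_set J P D A = {\<phi>. \<forall>\<omega>\<in>A. \<exists>ts. ts \<noteq> [] \<and> set ts \<subseteq> D \<and>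
       proj_wedge J (map (\<lambda>t. P t (\<omega> t)) ts) \<phi> = 0}"

end

theory Submission
  imports Defs
begin

text \<open>The subspace H_pi on which pi commutes is invariant under every p^t_a, since appending
  the same factor to two products with the same multiset of factors preserves that property.
  Hence the orthogonal projection p_pi commutes with every p^t_a and maps the common range M of
  p^t1_a1, ..., p^tk_ak into itself. Now p^(t1..tk)_(a1..ak) phi = 0 says that phi is orthogonal
  to M, and then so is p_pi phi, because <p_pi phi, y> = <phi, p_pi y>: this is (a).
  For (b), p_pi is a continuous retraction onto the closed subspace H_pi which by (a) maps F
  into F \<inter> H_pi; so it maps the closure of F into the closure of F \<inter> H_pi while fixing
  every point of H_pi.\<close>

definition orthogonal_projection :: "'a::real_inner set \<Rightarrow> ('a \<Rightarrow> 'a) \<Rightarrow> bool" where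
  "orthogonal_projection M p \<longleftrightarrow> (\<forall>x. p x \<in> M \<and> (\<forall>y\<in>M. inner (x - p x) y = 0))"

lemma norm_diff_eq_midpoint:
  fixes x a b :: "'a::real_inner"
  shows "norm (a - b)^2 = 2 * norm (x - a)^2 + 2 * norm (x - b)^2 - 4 * norm (x - midpoint a b)^2"
  by (simp add: midpoint_def power2_norm_eq_inner inner_add_left inner_add_right
      inner_diff_left inner_diff_right inner_commute algebra_simps)

lemma infdist_sq_approx:
  fixes x :: "'a::metric_space"
  assumes "A \<noteq> {}" and "0 < e"
  obtains a where "a \<in> A" and "dist x a ^ 2 < infdist x A ^ 2 + e"
proof -
  have "infdist x A < sqrt (infdist x A ^ 2 + e)"
    using \<open>0 < e\<close> by (intro real_less_rsqrt) simp
  moreover have "bdd_below (dist x ` A)" by (rule bdd_belowI2[of _ 0]) auto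
  ultimately obtain a where "a \<in> A" and "dist x a < sqrt (infdist x A ^ 2 + e)"
    using cINF_less_iff[of A "dist x"] infdist_notempty[OF \<open>A \<noteq> {}\<close>] \<open>A \<noteq> {}\<close> by auto
  moreover have "dist x a ^ 2 < sqrt (infdist x A ^ 2 + e) ^ 2"
    using calculation(2) by (intro power_strict_mono) auto
  ultimately show ?thesis using that \<open>0 < e\<close> by auto
qed

lemma convex_minimizing_sequence_Cauchy:
  fixes M :: "'a::real_inner set"
  assumes "convex M" and m_in: "\<And>n. m n \<in> M"
    and m_near: "\<And>n. norm (x - m n) ^ 2 < infdist x M ^ 2 + inverse (real (Suc n))"
  shows "Cauchy m"
proof (rule CauchyI)
  have m_close: "norm (m n - m k)^2 < 2 * inverse (real (Suc n)) + 2 * inverse (real (Suc k))" for n k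
  proof -
    have "midpoint (m n) (m k) \<in> M"
      using convexD[OF \<open>convex M\<close> m_in m_in, of "1/2" "1/2"] by (simp add: midpoint_def scaleR_add_right)
    then have "infdist x M ^ 2 \<le> norm (x - midpoint (m n) (m k)) ^ 2"
      using infdist_le[of _ M x] by (intro power_mono) (auto simp: dist_norm infdist_nonneg)
    then show ?thesis using norm_diff_eq_midpoint[of "m n" "m k" x] m_near[of n] m_near[of k] by linarith
  qed
  fix r :: real assume "0 < r"
  then have "0 < r^2 / 4" by simp
  then obtain N where N: "inverse (real (Suc N)) < r^2 / 4"
    using reals_Archimedean by blast
  have "norm (m n - m k) < r" if "N \<le> n" "N \<le> k" for n k
  proof -
    have "inverse (real (Suc n)) \<le> inverse (real (Suc N))" "inverse (real (Suc k)) \<le> inverse (real (Suc N))"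
      using that by (simp_all add: field_simps)
    then have "norm (m n - m k)^2 < r^2" using m_close[of n k] N by linarith
    then show ?thesis using \<open>0 < r\<close> by (simp add: power_less_imp_less_base)
  qed
  then show "\<exists>N. \<forall>n\<ge>N. \<forall>k\<ge>N. norm (m n - m k) < r" by blast
qed

text \<open>HOL-Analysis has nearest points (closest_point) only in Euclidean spaces, so the
  projection theorem for complete inner product spaces is proved here.\<close>

lemma closed_convex_nearest_point_exists:
  fixes M :: "'a::{real_inner,complete_space} set"
  assumes "closed M" and "convex M" and "M \<noteq> {}"
  obtains m where "m \<in> M" and "\<And>a. a \<in> M \<Longrightarrow> norm (x - m) \<le> norm (x - a)"
proof -
  define d where "d = infdist x M"
  have "0 \<le> d" by (simp add: d_def infdist_nonneg)
  have d_le: "d \<le> norm (x - a)" if "a \<in> M" for a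
    using infdist_le[OF that, of x] by (simp add: d_def dist_norm)
  have "\<exists>a\<in>M. norm (x - a)^2 < d^2 + inverse (real (Suc n))" for n
  proof -
    obtain a where "a \<in> M" and "dist x a ^ 2 < infdist x M ^ 2 + inverse (real (Suc n))"
      using infdist_sq_approx[OF \<open>M \<noteq> {}\<close>, of "inverse (real (Suc n))" x] by auto
    then show ?thesis by (auto simp: d_def dist_norm)
  qed
  then obtain m where m_in: "\<And>n. m n \<in> M"
    and m_near: "\<And>n. norm (x - m n)^2 < d^2 + inverse (real (Suc n))"
    by metis
  have "Cauchy m"
    using convex_minimizing_sequence_Cauchy[where m = m, OF \<open>convex M\<close> m_in m_near[unfolded d_def]] .
  then obtain m0 where lim: "m \<longlonglongrightarrow> m0" using Cauchy_convergent_iff convergent_def by blast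
  have "norm (x - m0)^2 \<le> d^2"
  proof (rule tendsto_le[OF trivial_limit_sequentially])
    show "(\<lambda>n. d^2 + inverse (real (Suc n))) \<longlonglongrightarrow> d^2"
      using tendsto_add[OF tendsto_const LIMSEQ_inverse_real_of_nat] by simp
    show "(\<lambda>n. norm (x - m n)^2) \<longlonglongrightarrow> norm (x - m0)^2" by (intro tendsto_intros lim)
    show "\<forall>\<^sub>F n in sequentially. norm (x - m n)^2 \<le> d^2 + inverse (real (Suc n))"
      using m_near by (simp add: less_imp_le)
  qed
  then have "norm (x - m0) \<le> d" using \<open>0 \<le> d\<close> by (rule power2_le_imp_le)
  show ?thesis
  proof (rule that)
    show "m0 \<in> M" using \<open>closed M\<close> m_in lim closed_sequentially by blast
    show "norm (x - m0) \<le> norm (x - a)" if "a \<in> M" for a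
      using \<open>norm (x - m0) \<le> d\<close> d_le[OF that] by linarith
  qed
qed

lemma subspace_nearest_point_orthogonal:
  fixes M :: "'a::real_inner set"
  assumes "subspace M" and "m \<in> M" and nearest: "\<And>a. a \<in> M \<Longrightarrow> norm (x - m) \<le> norm (x - a)"
    and "y \<in> M"
  shows "inner (x - m) y = 0"
proof (cases "y = 0")
  case False
  define c where "c = inner (x - m) y"
  define t where "t = c / inner y y"
  have "0 < inner y y" using False by simp
  have "m + t *\<^sub>R y \<in> M" using assms by (simp add: subspace_add subspace_scale)
  then have "norm (x - m)^2 \<le> norm (x - (m + t *\<^sub>R y))^2" using nearest by (simp add: power_mono)
  also have "\<dots> = norm (x - m)^2 - 2 * t * c + t^2 * inner y y"
    unfolding power2_norm_eq_inner
    by (simp add: inner_diff_left inner_diff_right inner_add_left inner_add_right inner_commute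
        c_def algebra_simps power2_eq_square)
  also have "\<dots> = norm (x - m)^2 - c^2 / inner y y"
    using \<open>0 < inner y y\<close> by (simp add: t_def power2_eq_square field_simps)
  finally have "c^2 \<le> 0" using \<open>0 < inner y y\<close> by (simp add: divide_le_0_iff)
  then show ?thesis by (simp add: c_def)
qed simp

lemma orthogonal_projection_exists:
  fixes M :: "'a::{real_inner,complete_space} set"
  assumes "closed M" and "subspace M"
  obtains p where "orthogonal_projection M p"
proof -
  have "M \<noteq> {}" using subspace_0[OF assms(2)] by blast
  have "\<exists>m\<in>M. \<forall>y\<in>M. inner (x - m) y = 0" for x
  proof -
    obtain m where "m \<in> M" and "\<And>a. a \<in> M \<Longrightarrow> norm (x - m) \<le> norm (x - a)"
      using closed_convex_nearest_point_exists[OF assms(1) subspace_imp_convex[OF assms(2)] \<open>M \<noteq> {}\<close>]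
      by blast
    then show ?thesis using subspace_nearest_point_orthogonal[OF assms(2)] by blast
  qed
  then show ?thesis using that unfolding orthogonal_projection_def by metis
qed

lemma orthogonal_projection_eqI:
  fixes M :: "'a::real_inner set"
  assumes "subspace M" and "orthogonal_projection M p"
    and "m \<in> M" and "\<And>y. y \<in> M \<Longrightarrow> inner (x - m) y = 0"
  shows "p x = m"
proof -
  have "p x - m \<in> M" and "\<And>y. y \<in> M \<Longrightarrow> inner (x - p x) y = 0"
    using assms by (auto simp: orthogonal_projection_def subspace_diff)
  then have "inner ((x - m) - (x - p x)) (p x - m) = 0"
    using assms(4) by (simp add: inner_diff_left)
  then show ?thesis by simp
qed

lemma orthogonal_projection_in:
  "orthogonal_projection M p \<Longrightarrow> p x \<in> M"
  by (simp add: orthogonal_projection_def)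

lemma orthogonal_projection_orthogonal:
  "orthogonal_projection M p \<Longrightarrow> y \<in> M \<Longrightarrow> inner (x - p x) y = 0"
  by (simp add: orthogonal_projection_def)

lemma orthogonal_projection_fixes:
  fixes M :: "'a::real_inner set"
  assumes "subspace M" and "orthogonal_projection M p" and "m \<in> M"
  shows "p m = m"
  using orthogonal_projection_eqI[OF assms] by simp

lemma orthogonal_projection_self_adjoint:
  assumes "orthogonal_projection M p"
  shows "inner (p x) y = inner x (p y)"
proof -
  have "inner (p x) (y - p y) = 0" and "inner (x - p x) (p y) = 0"
    using assms by (auto simp: orthogonal_projection_def inner_commute)
  then show ?thesis by (simp add: inner_diff_left inner_diff_right)
qed

lemma orthogonal_projection_eq_0_iff:
  fixes M :: "'a::real_inner set"
  assumes "subspace M" and "orthogonal_projection M p"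
  shows "p x = 0 \<longleftrightarrow> (\<forall>y\<in>M. inner x y = 0)"
proof
  show "\<forall>y\<in>M. inner x y = 0" if "p x = 0"
    using orthogonal_projection_orthogonal[OF assms(2), of _ x] that by simp
  show "p x = 0" if "\<forall>y\<in>M. inner x y = 0"
    using that by (intro orthogonal_projection_eqI[OF assms subspace_0[OF assms(1)]]) simp
qed

lemma orthogonal_projection_bounded_linear:
  fixes M :: "'a::real_inner set"
  assumes "subspace M" and "orthogonal_projection M p"
  shows "bounded_linear p"
proof (rule bounded_linear_intro[where K = 1])
  note in_M = orthogonal_projection_in[OF assms(2)]
    and orth = orthogonal_projection_orthogonal[OF assms(2)]
  show "p (x + y) = p x + p y" for x y
    using orth[of _ x] orth[of _ y] in_M
    by (intro orthogonal_projection_eqI[OF assms])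
      (auto simp: subspace_add[OF assms(1)] algebra_simps inner_diff_left inner_add_left)
  show "p (r *\<^sub>R x) = r *\<^sub>R p x" for r x
    using orth[of _ x] in_M
    by (intro orthogonal_projection_eqI[OF assms])
      (auto simp: subspace_scale[OF assms(1)] scaleR_diff_right[symmetric])
  show "norm (p x) \<le> norm x * 1" for x
  proof -
    have "orthogonal (p x) (x - p x)"
      using orth in_M by (simp add: orthogonal_def inner_commute)
    then have "norm x^2 = norm (p x)^2 + norm (x - p x)^2"
      using norm_add_Pythagorean by fastforce
    then show ?thesis by (simp add: power2_le_imp_le)
  qed
qed

lemma bounded_linear_equalizer:
  assumes "bounded_linear f" and "bounded_linear g"
  shows "closed {x. f x = g x}" and "subspace {x. f x = g x}"
proof -
  interpret f: bounded_linear f by fact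
  interpret g: bounded_linear g by fact
  show "closed {x. f x = g x}"
    by (intro closed_Collect_eq f.continuous_on g.continuous_on continuous_on_id)
  show "subspace {x. f x = g x}"
    by (auto simp: subspace_def f.add g.add f.scale g.scale f.zero g.zero)
qed

lemma is_projectionD:
  assumes "is_projection J p"
  shows "bounded_linear p" and "p (J x) = J (p x)" and "inner (p x) y = inner x (p y)"
    and "p (p x) = p x"
  using assms unfolding is_projection_def by blast+

lemma is_projection_range_iff:
  assumes "is_projection J p"
  shows "x \<in> range p \<longleftrightarrow> p x = x"
proof
  show "p x = x" if "x \<in> range p"
    using that is_projectionD(4)[OF assms] by blast
  show "x \<in> range p" if "p x = x"
    using that by (metis rangeI)
qed

lemma is_projection_range:
  assumes "is_projection J p"
  shows "closed (range p)" and "subspace (range p)" and "J ` range p \<subseteq> range p"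
proof -
  have "range p = {x. p x = x}" using is_projection_range_iff[OF assms] by blast
  moreover note bounded_linear_equalizer[OF is_projectionD(1)[OF assms] bounded_linear_ident]
  ultimately show "closed (range p)" and "subspace (range p)" by simp_all
  show "J ` range p \<subseteq> range p"
  proof
    fix y assume "y \<in> J ` range p"
    then obtain x where "y = J (p x)" by blast
    then show "y \<in> range p" unfolding is_projectionD(2)[OF assms, symmetric] by blast
  qed
qed

lemma is_projection_imp_orthogonal_projection:
  assumes "is_projection J p"
  shows "orthogonal_projection (range p) p"
  unfolding orthogonal_projection_def
proof (intro allI conjI ballI rangeI)
  fix x y assume "y \<in> range p"
  then obtain w where "y = p w" by blast
  have "linear p" by (rule bounded_linear.linear[OF is_projectionD(1)[OF assms]])
  then have "p (x - p x) = 0" using is_projectionD(4)[OF assms] by (simp add: linear_diff)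
  then have "inner (p (x - p x)) w = 0" by simp
  then show "inner (x - p x) y = 0"
    unfolding \<open>y = p w\<close> is_projectionD(3)[OF assms] .
qed

lemma orthogonal_projection_is_projection:
  assumes "complex_structure J" and "subspace M" and "J ` M \<subseteq> M"
    and "orthogonal_projection M p"
  shows "is_projection J p" and "range p = M"
proof -
  have "linear J" and J_J: "\<And>x. J (J x) = - x" and J_inner: "\<And>x y. inner (J x) (J y) = inner x y"
    using assms(1) unfolding complex_structure_def by blast+
  note in_M = orthogonal_projection_in[OF assms(4)]
    and orth = orthogonal_projection_orthogonal[OF assms(4)]
    and fixed = orthogonal_projection_fixes[OF assms(2,4)]
  have "p (J x) = J (p x)" for x
  proof (rule orthogonal_projection_eqI[OF assms(2,4)])
    show "J (p x) \<in> M" using assms(3) in_M by blast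
    show "inner (J x - J (p x)) y = 0" if "y \<in> M" for y
    proof -
      have "J y \<in> M" using assms(3) that by blast
      have "inner (J x - J (p x)) y = inner (J (x - p x)) y"
        using \<open>linear J\<close> by (simp add: linear_diff)
      also have "\<dots> = inner (J (J (x - p x))) (J y)" by (rule J_inner[symmetric])
      also have "\<dots> = - inner (x - p x) (J y)" by (simp add: J_J inner_diff_left)
      also have "\<dots> = 0" using orth[OF \<open>J y \<in> M\<close>] by simp
      finally show ?thesis .
    qed
  qed
  then show "is_projection J p"
    unfolding is_projection_def
    using orthogonal_projection_bounded_linear[OF assms(2,4)] in_M fixed
      orthogonal_projection_self_adjoint[OF assms(4)]
    by blast
  show "range p = M"
  proof
    show "range p \<subseteq> M" using in_M by blast
    show "M \<subseteq> range p"
    proof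
      fix m assume "m \<in> M"
      then have "m = p m" using fixed by simp
      then show "m \<in> range p" by blast
    qed
  qed
qed

lemma orthogonal_projection_proj_onto:
  fixes J :: "'a::{real_inner,complete_space} \<Rightarrow> 'a"
  assumes "complex_structure J" and "closed M" and "subspace M" and "J ` M \<subseteq> M"
  shows "orthogonal_projection M (proj_onto J M)"
proof -
  obtain p where p: "orthogonal_projection M p"
    using orthogonal_projection_exists[OF assms(2,3)] .
  have "proj_onto J M = p"
    unfolding proj_onto_def
  proof (rule the_equality)
    show "is_projection J p \<and> range p = M"
      using orthogonal_projection_is_projection[OF assms(1,3,4) p] by simp
    show "q = p" if "is_projection J q \<and> range q = M" for q
    proof
      fix x
      have q: "orthogonal_projection M q"
        using that is_projection_imp_orthogonal_projection by blast
      show "q x = p x"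
        using orthogonal_projection_eqI[OF assms(3) p orthogonal_projection_in[OF q]
            orthogonal_projection_orthogonal[OF q]] by simp
    qed
  qed
  then show ?thesis using p by simp
qed

lemma orthogonal_projection_proj_wedge:
  fixes J :: "'a::{real_inner,complete_space} \<Rightarrow> 'a"
  assumes "complex_structure J" and "\<And>p. p \<in> set ps \<Longrightarrow> is_projection J p"
  shows "orthogonal_projection (\<Inter>p\<in>set ps. range p) (proj_wedge J ps)"
proof -
  let ?M = "\<Inter>p\<in>set ps. range p"
  have "closed ?M" by (intro closed_INT ballI is_projection_range(1)[OF assms(2)])
  moreover have "subspace ?M" by (intro subspace_Int is_projection_range(2)[OF assms(2)])
  moreover have "J ` ?M \<subseteq> ?M"
  proof (intro image_subsetI INT_I)
    fix x p assume "x \<in> ?M" and "p \<in> set ps"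
    then have "x \<in> range p" by blast
    then show "J x \<in> range p"
      using is_projection_range(3)[OF assms(2)[OF \<open>p \<in> set ps\<close>]] by blast
  qed
  ultimately show ?thesis
    unfolding proj_wedge_def by (rule orthogonal_projection_proj_onto[OF assms(1)])
qed

lemma orthogonal_projection_commute:
  fixes H :: "'a::real_inner set"
  assumes "linear p" and p_adjoint: "\<And>x y. inner (p x) y = inner x (p y)"
    and "subspace H" and q: "orthogonal_projection H q" and "p ` H \<subseteq> H"
  shows "p (q x) = q (p x)"
proof -
  have "q (p x) = p (q x)"
  proof (rule orthogonal_projection_eqI[OF \<open>subspace H\<close> q])
    show "p (q x) \<in> H" using \<open>p ` H \<subseteq> H\<close> orthogonal_projection_in[OF q] by blast
    show "inner (p x - p (q x)) y = 0" if "y \<in> H" for y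
    proof -
      have "p y \<in> H" using \<open>p ` H \<subseteq> H\<close> that by blast
      have "inner (p x - p (q x)) y = inner (p (x - q x)) y"
        using \<open>linear p\<close> by (simp add: linear_diff)
      also have "\<dots> = inner (x - q x) (p y)" by (rule p_adjoint)
      also have "\<dots> = 0" by (rule orthogonal_projection_orthogonal[OF q \<open>p y \<in> H\<close>])
      finally show ?thesis .
    qed
  qed
  then show ?thesis by simp
qed

lemma proj_wedge_eq_0_orthogonal_projection:
  fixes J :: "'a::{real_inner,complete_space} \<Rightarrow> 'a"
  assumes "complex_structure J" and proj: "\<And>p. p \<in> set ps \<Longrightarrow> is_projection J p"
    and invariant: "\<And>p. p \<in> set ps \<Longrightarrow> p ` H \<subseteq> H"
    and "subspace H" and q: "orthogonal_projection H q"
    and "proj_wedge J ps \<phi> = 0"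
  shows "proj_wedge J ps (q \<phi>) = 0"
proof -
  let ?M = "\<Inter>p\<in>set ps. range p"
  have wedge: "orthogonal_projection ?M (proj_wedge J ps)"
    by (rule orthogonal_projection_proj_wedge[OF assms(1) proj])
  have "subspace ?M" by (intro subspace_Int is_projection_range(2)[OF proj])
  have q_M: "q y \<in> ?M" if "y \<in> ?M" for y
  proof (intro INT_I)
    fix p assume "p \<in> set ps"
    note p = proj[OF this] and p_H = invariant[OF this]
    have "p y = y" using that \<open>p \<in> set ps\<close> is_projection_range_iff[OF p] by blast
    moreover have "p (q y) = q (p y)"
      using is_projectionD(3)[OF p] bounded_linear.linear[OF is_projectionD(1)[OF p]]
      by (intro orthogonal_projection_commute[OF _ _ \<open>subspace H\<close> q p_H])
    ultimately show "q y \<in> range p" using is_projection_range_iff[OF p] by simp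
  qed
  have "\<forall>y\<in>?M. inner \<phi> y = 0"
    using assms(6) orthogonal_projection_eq_0_iff[OF \<open>subspace ?M\<close> wedge] by blast
  then have "\<forall>y\<in>?M. inner (q \<phi>) y = 0"
    using q_M by (simp add: orthogonal_projection_self_adjoint[OF q])
  then show ?thesis using orthogonal_projection_eq_0_iff[OF \<open>subspace ?M\<close> wedge] by blast
qed

lemma prod_ops_Nil [simp]: "prod_ops P [] = id"
  by (simp add: prod_ops_def)

lemma prod_ops_Cons [simp]: "prod_ops P ((t, a) # xs) = P t a \<circ> prod_ops P xs"
  by (simp add: prod_ops_def)

lemma prod_ops_append_single: "prod_ops P (xs @ [(t, a)]) = prod_ops P xs \<circ> P t a"
  by (induction xs) (auto simp: prod_ops_def)

lemma valid_idx_Cons [simp]: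
  "valid_idx S \<Gamma> ((t, a) # xs) \<longleftrightarrow> t \<in> S \<and> a \<in> \<Gamma> t \<and> valid_idx S \<Gamma> xs"
  by (auto simp: valid_idx_def)

lemma proj_family_is_projection:
  "proj_family J S \<Gamma> P \<Longrightarrow> t \<in> S \<Longrightarrow> a \<in> \<Gamma> t \<Longrightarrow> is_projection J (P t a)"
  by (simp add: proj_family_def)

lemma bounded_linear_prod_ops:
  assumes "proj_family J S \<Gamma> P" and "valid_idx S \<Gamma> xs"
  shows "bounded_linear (prod_ops P xs)"
  using assms(2)
proof (induction xs)
  case Nil
  then show ?case by (simp add: id_def bounded_linear_ident)
next
  case (Cons ta xs)
  obtain t a where "ta = (t, a)" by fastforce
  with Cons have "bounded_linear (P t a)" and "bounded_linear (prod_ops P xs)"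
    using is_projectionD(1)[OF proj_family_is_projection[OF assms(1)]] by auto
  then show ?case using \<open>ta = (t, a)\<close> by (simp add: comp_def bounded_linear_compose)
qed

lemma prod_ops_complex_linear:
  assumes "proj_family J S \<Gamma> P" and "valid_idx S \<Gamma> xs"
  shows "prod_ops P xs (J x) = J (prod_ops P xs x)"
  using assms(2)
proof (induction xs)
  case (Cons ta xs)
  obtain t a where "ta = (t, a)" by fastforce
  with Cons show ?case
    using is_projectionD(2)[OF proj_family_is_projection[OF assms(1)]] by auto
qed simp

lemma H_pi_eq_INT:
  "H_pi S \<Gamma> P = (\<Inter>(xs, ys)\<in>{(xs, ys). valid_idx S \<Gamma> xs \<and> valid_idx S \<Gamma> ys \<and> mset xs = mset ys}.
      {\<phi>. prod_ops P xs \<phi> = prod_ops P ys \<phi>})"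
  by (auto simp: H_pi_def commutes_on_def)

lemma closed_H_pi:
  assumes "proj_family J S \<Gamma> P"
  shows "closed (H_pi S \<Gamma> P)"
  unfolding H_pi_eq_INT
  using bounded_linear_equalizer(1)[OF bounded_linear_prod_ops[OF assms] bounded_linear_prod_ops[OF assms]]
  by (auto intro!: closed_INT)

lemma subspace_H_pi:
  assumes "proj_family J S \<Gamma> P"
  shows "subspace (H_pi S \<Gamma> P)"
  unfolding H_pi_eq_INT
  using bounded_linear_equalizer(2)[OF bounded_linear_prod_ops[OF assms] bounded_linear_prod_ops[OF assms]]
  by (auto intro!: subspace_Int)

lemma H_pi_complex_invariant:
  assumes "proj_family J S \<Gamma> P"
  shows "J ` H_pi S \<Gamma> P \<subseteq> H_pi S \<Gamma> P"
proof (intro image_subsetI)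
  fix \<phi> assume "\<phi> \<in> H_pi S \<Gamma> P"
  have "prod_ops P xs (J \<phi>) = prod_ops P ys (J \<phi>)"
    if "valid_idx S \<Gamma> xs" and "valid_idx S \<Gamma> ys" and "mset xs = mset ys" for xs ys
  proof -
    have "prod_ops P xs \<phi> = prod_ops P ys \<phi>"
      using \<open>\<phi> \<in> H_pi S \<Gamma> P\<close> that unfolding H_pi_def commutes_on_def by blast
    then show ?thesis using that by (simp add: prod_ops_complex_linear[OF assms])
  qed
  then show "J \<phi> \<in> H_pi S \<Gamma> P" by (simp add: H_pi_def commutes_on_def)
qed

lemma H_pi_invariant:
  assumes "t \<in> S" and "a \<in> \<Gamma> t"
  shows "P t a ` H_pi S \<Gamma> P \<subseteq> H_pi S \<Gamma> P"
proof (intro image_subsetI)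
  fix \<phi> assume "\<phi> \<in> H_pi S \<Gamma> P"
  have "prod_ops P (xs @ [(t, a)]) \<phi> = prod_ops P (ys @ [(t, a)]) \<phi>"
    if "valid_idx S \<Gamma> xs" and "valid_idx S \<Gamma> ys" and "mset xs = mset ys" for xs ys
    using \<open>\<phi> \<in> H_pi S \<Gamma> P\<close> that assms unfolding H_pi_def commutes_on_def
    by (auto simp: valid_idx_def)
  then show "P t a \<phi> \<in> H_pi S \<Gamma> P"
    by (simp add: H_pi_def commutes_on_def prod_ops_append_single)
qed

lemma orthogonal_projection_p_pi:
  assumes "complex_structure J" and "proj_family J S \<Gamma> P"
  shows "orthogonal_projection (H_pi S \<Gamma> P) (p_pi J S \<Gamma> P)"
  unfolding p_pi_def
  using assms(1) closed_H_pi[OF assms(2)] subspace_H_pi[OF assms(2)] H_pi_complex_invariant[OF assms(2)]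
  by (rule orthogonal_projection_proj_onto)

lemma orthogonal_projection_preserves_F_set:
  fixes J :: "'h::{real_inner,complete_space} \<Rightarrow> 'h"
  assumes "complex_structure J" and fam: "proj_family J S \<Gamma> P"
    and "D \<subseteq> S" and "A \<subseteq> Pi\<^sub>E S \<Gamma>"
    and "subspace H" and q: "orthogonal_projection H q"
    and invariant: "\<And>t a. t \<in> S \<Longrightarrow> a \<in> \<Gamma> t \<Longrightarrow> P t a ` H \<subseteq> H"
    and "\<phi> \<in> F_set J P D A"
  shows "q \<phi> \<in> F_set J P D A"
  unfolding F_set_def mem_Collect_eq
proof
  fix \<omega> assume "\<omega> \<in> A"
  then obtain ts where ts: "ts \<noteq> []" "set ts \<subseteq> D"
    and zero: "proj_wedge J (map (\<lambda>t. P t (\<omega> t)) ts) \<phi> = 0"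
    using \<open>\<phi> \<in> F_set J P D A\<close> unfolding F_set_def by blast
  have idx: "t \<in> S" "\<omega> t \<in> \<Gamma> t" if "t \<in> set ts" for t
    using that ts(2) \<open>D \<subseteq> S\<close> \<open>A \<subseteq> Pi\<^sub>E S \<Gamma>\<close> \<open>\<omega> \<in> A\<close> by (auto simp: PiE_def Pi_def)
  have "proj_wedge J (map (\<lambda>t. P t (\<omega> t)) ts) (q \<phi>) = 0"
  proof (rule proj_wedge_eq_0_orthogonal_projection[OF assms(1) _ _ \<open>subspace H\<close> q zero])
    show "is_projection J p" if "p \<in> set (map (\<lambda>t. P t (\<omega> t)) ts)" for p
      using that idx proj_family_is_projection[OF fam] by auto
    show "p ` H \<subseteq> H" if "p \<in> set (map (\<lambda>t. P t (\<omega> t)) ts)" for p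
      using that idx invariant by fastforce
  qed
  then show "\<exists>ts. ts \<noteq> [] \<and> set ts \<subseteq> D \<and> proj_wedge J (map (\<lambda>t. P t (\<omega> t)) ts) (q \<phi>) = 0"
    using ts by blast
qed

lemma closure_Int_retraction:
  fixes r :: "'a::topological_space \<Rightarrow> 'a"
  assumes "continuous_on UNIV r" and "closed H"
    and "r ` F \<subseteq> F \<inter> H" and "\<And>x. x \<in> H \<Longrightarrow> r x = x"
  shows "closure F \<inter> H = closure (F \<inter> H)"
proof
  show "closure (F \<inter> H) \<subseteq> closure F \<inter> H"
    using closure_mono[of "F \<inter> H" F] closure_minimal[of "F \<inter> H" H] \<open>closed H\<close> by blast
  have "r ` closure F \<subseteq> closure (F \<inter> H)"
    using assms(3) closure_subset[of "F \<inter> H"]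
    by (intro image_closure_subset continuous_on_subset[OF assms(1)]) auto
  then show "closure F \<inter> H \<subseteq> closure (F \<inter> H)"
    using assms(4) by force
qed

theorem lemma9:
  fixes J :: "'h::{real_inner,complete_space} \<Rightarrow> 'h"
    and S :: "'s set" and \<Gamma> :: "'s \<Rightarrow> 'a set" and P :: "'s \<Rightarrow> 'a \<Rightarrow> 'h \<Rightarrow> 'h"
    and D :: "'s set" and A :: "('s \<Rightarrow> 'a) set"
  assumes "complex_structure J"
    and "proj_family J S \<Gamma> P"
    and "D \<subseteq> S" and "A \<subseteq> Pi\<^sub>E S \<Gamma>"
  shows "(\<forall>\<phi>\<in>F_set J P D A. p_pi J S \<Gamma> P \<phi> \<in> F_set J P D A)
    \<and> closure (F_set J P D A) \<inter> H_pi S \<Gamma> P = closure (F_set J P D A \<inter> H_pi S \<Gamma> P)"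
proof
  let ?F = "F_set J P D A" and ?H = "H_pi S \<Gamma> P" and ?q = "p_pi J S \<Gamma> P"
  have q: "orthogonal_projection ?H ?q" by (rule orthogonal_projection_p_pi[OF assms(1,2)])
  note subspace = subspace_H_pi[OF assms(2)]
  show preserves: "\<forall>\<phi>\<in>?F. ?q \<phi> \<in> ?F"
    using orthogonal_projection_preserves_F_set[OF assms subspace q H_pi_invariant] by blast
  show "closure ?F \<inter> ?H = closure (?F \<inter> ?H)"
  proof (rule closure_Int_retraction)
    show "continuous_on UNIV ?q"
      by (rule linear_continuous_on[OF orthogonal_projection_bounded_linear[OF subspace q]])
    show "closed ?H" by (rule closed_H_pi[OF assms(2)])
    show "?q ` ?F \<subseteq> ?F \<inter> ?H" using preserves orthogonal_projection_in[OF q] by blast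
    show "?q x = x" if "x \<in> ?H" for x by (rule orthogonal_projection_fixes[OF subspace q that])
  qed
qed

end
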